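(* Let $f\colon\mathbb{R}^n\to\mathbb{R}$ be a strictly convex quadratic function, $f(x)=\tfrac12x^TAx+b^Tx+c$ with $A$ symmetric positive definite, with unique minimizer $x^*$. Then the linesearch-free BFGS method, started from any $x_0\in\mathbb{R}^n$ and any symmetric positive definite $H_0$, generates iterates converging to $x^*$.
   Context: The unit-step BFGS update at a point $x$ with $g=\nabla f(x)\ne 0$ maps a symmetric positive definite $H$ to $H_+=VHV^T+\frac{ss^T}{s^Ty}$, where $s=-Hg$, $x_+=x+s$, $y=\nabla f(x_+)-g$, $V=I-\frac{sy^T}{s^Ty}$. The linesearch-free BFGS method: given the current iterate $x_k$ and matrix $H$, compute $s=-H\nabla f(x_k)$, replace $H$ by its unit-step BFGS update at $x_k$, and set $x_{k+1}=x_k+s$ if $f(x_k+s)<f(x_k)$, and $x_{k+1}=x_k$ otherwise; repeat. (If an iterate equals the minimizer, the gradient vanishes and the method stops there.) *)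

theory Defs
  imports "HOL-Analysis.Analysis"
begin

definition outer :: "real^'n \<Rightarrow> real^'n \<Rightarrow> real^'n^'n" where
  "outer u v = (\<chi> i j. u $ i * v $ j)"

definition bfgs_update ::
  "(real^'n \<Rightarrow> real^'n) \<Rightarrow> real^'n \<Rightarrow> real^'n^'n \<Rightarrow> real^'n^'n" where
  "bfgs_update grad x H =
     (let g = grad x; s = - (H *v g); y = grad (x + s) - g;
          V = mat 1 - (1 / (s \<bullet> y)) *\<^sub>R outer s y
      in V ** H ** transpose V + (1 / (s \<bullet> y)) *\<^sub>R outer s s)"

definition lf_bfgs_step ::
  "(real^'n \<Rightarrow> real) \<Rightarrow> (real^'n \<Rightarrow> real^'n) \<Rightarrow> (real^'n) \<times> (real^'n^'n) \<Rightarrow> (real^'n) \<times> (real^'n^'n)" where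
  "lf_bfgs_step f grad st =
     (let x = fst st; H = snd st; g = grad x; s = - (H *v g)
      in if g = 0 then st
         else ((if f (x + s) < f x then x + s else x), bfgs_update grad x H))"

primrec lf_bfgs ::
  "(real^'n \<Rightarrow> real) \<Rightarrow> (real^'n \<Rightarrow> real^'n) \<Rightarrow> real^'n \<Rightarrow> real^'n^'n \<Rightarrow> nat \<Rightarrow> (real^'n) \<times> (real^'n^'n)" where
  "lf_bfgs f grad x0 H0 0 = (x0, H0)"
| "lf_bfgs f grad x0 H0 (Suc k) = lf_bfgs_step f grad (lf_bfgs f grad x0 H0 k)"

end

theory Submission
  imports Defs
begin

text \<open>Factor A = C C^T. In the coordinates z = C^T (x - xstar), T = C^T H C the method
  becomes the linesearch-free BFGS method for norm z ^ 2 / 2, whose update reads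
  T' = P T P + s s^T / (s^T s) with P the orthogonal projection onto the complement of s.
  Hence E = T - I satisfies E' = P E P, so the squared Frobenius norm of E drops by at least
  norm (E s) ^ 2 / norm s ^ 2 in every step and these relative errors are summable. The
  updates keep T symmetric with a uniform lower bound mu on its spectrum; once
  norm (E s) \<le> mu / 4 * norm s, the unit step s = - T z is accepted and contracts z by a
  factor 1/3, so z converges to 0 geometrically.\<close>

section \<open>Outer products and matrix algebra\<close>

text \<open>Keep transpose C *v x in this form; the default simp rule rewrites it to x v* C.\<close>
declare transpose_matrix_vector [simp del]

lemma outer_mult_vec: "outer u v *v w = (v \<bullet> w) *\<^sub>R u"
  by (simp add: outer_def vec_eq_iff matrix_vector_mult_def inner_vec_def sum_distrib_left mult_ac)

lemma outer_zero [simp]: "outer 0 v = 0" "outer u 0 = 0"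
  by (simp_all add: outer_def vec_eq_iff)

lemma matrix_mult_outer: "M ** outer u v = outer (M *v u) v"
  by (simp add: outer_def vec_eq_iff matrix_matrix_mult_def matrix_vector_mult_def sum_distrib_right)
     (simp add: sum_distrib_left algebra_simps)

lemma outer_mult_matrix: "outer u v ** M = outer u (transpose M *v v)"
  by (simp add: outer_def vec_eq_iff matrix_matrix_mult_def matrix_vector_mult_def transpose_def
      sum_distrib_left mult_ac)

lemma transpose_outer: "transpose (outer u v) = outer v u"
  by (simp add: outer_def vec_eq_iff transpose_def mult_ac)

lemma trace_outer: "trace (outer u v) = u \<bullet> v"
  by (simp add: outer_def trace_def inner_vec_def)

lemma outer_mult_outer: "outer a b ** outer c d = (b \<bullet> c) *\<^sub>R outer a d"
  by (simp add: outer_def vec_eq_iff matrix_matrix_mult_def inner_vec_def sum_distrib_left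
      sum_distrib_right mult_ac)

lemma inner_matrix_vector_transpose: "x \<bullet> ((M::real^'n^'m) *v y) = (transpose M *v x) \<bullet> y"
  using dot_lmul_matrix[of x M y] by (simp add: transpose_matrix_vector)

lemma inner_sym_matrix_vector:
  "transpose M = M \<Longrightarrow> x \<bullet> ((M::real^'n^'n) *v y) = y \<bullet> (M *v x)"
  by (metis inner_commute inner_matrix_vector_transpose)

lemma matrix_vector_mult_minus: "(M::real^'n^'m) *v (- x) = - (M *v x)"
  by (simp add: vec_eq_iff matrix_vector_mult_def sum_negf)

lemma trace_scaleR: "trace (k *\<^sub>R (M::real^'n^'n)) = k * trace M"
  by (simp add: trace_def sum_distrib_left)

lemma matrix_mult_scaleR_left: "(k *\<^sub>R (M::real^'n^'m)) ** (N::real^'p^'n) = k *\<^sub>R (M ** N)"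
  by (simp add: vec_eq_iff matrix_matrix_mult_def sum_distrib_left mult_ac)

lemma matrix_mult_scaleR_right: "(M::real^'n^'m) ** (k *\<^sub>R (N::real^'p^'n)) = k *\<^sub>R (M ** N)"
  by (simp add: vec_eq_iff matrix_matrix_mult_def sum_distrib_left mult_ac)

lemma matrix_add_rdistrib: "((A::real^'n^'m) + B) ** (C::real^'p^'n) = A ** C + B ** C"
  by (simp add: vec_eq_iff matrix_matrix_mult_def algebra_simps sum.distrib)

lemma matrix_diff_rdistrib: "((A::real^'n^'m) - B) ** (C::real^'p^'n) = A ** C - B ** C"
  by (simp add: vec_eq_iff matrix_matrix_mult_def algebra_simps sum_subtractf)

lemma matrix_diff_ldistrib: "(C::real^'n^'m) ** ((A::real^'p^'n) - B) = C ** A - C ** B"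
  by (simp add: vec_eq_iff matrix_matrix_mult_def algebra_simps sum_subtractf)

lemma transpose_add: "transpose ((A::real^'n^'m) + B) = transpose A + transpose B"
  by (simp add: vec_eq_iff transpose_def)

lemma transpose_diff: "transpose ((A::real^'n^'m) - B) = transpose A - transpose B"
  by (simp add: vec_eq_iff transpose_def)

lemma matrix_scaleR_vector: "(k *\<^sub>R (A::real^'n^'m)) *v x = k *\<^sub>R (A *v x)"
  by (simp add: vec_eq_iff matrix_vector_mult_def sum_distrib_left mult_ac)

lemma trace_sym_square_nonneg:
  assumes "transpose (E::real^'n^'n) = E"
  shows "trace (E ** E) \<ge> 0"
proof -
  have "trace (E ** E) = trace (transpose E ** E)" using assms by simp
  also have "\<dots> = (\<Sum>i\<in>UNIV. \<Sum>j\<in>UNIV. (E$j$i)^2)"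
    by (simp add: trace_def matrix_matrix_mult_def transpose_def power2_eq_square)
  finally show ?thesis by (simp add: sum_nonneg)
qed

section \<open>Positive definite matrices\<close>

lemma pos_def_lower_bound:
  fixes M :: "real^'n^'n"
  assumes pd: "\<forall>v. v \<noteq> 0 \<longrightarrow> v \<bullet> (M *v v) > 0"
  obtains \<mu> where "0 < \<mu>" "\<mu> \<le> 1" "\<forall>v. \<mu> * (v \<bullet> v) \<le> v \<bullet> (M *v v)"
proof -
  define q where "q v = v \<bullet> (M *v v)" for v :: "real^'n"
  have "continuous_on (sphere 0 1) q"
    unfolding q_def by (intro continuous_on_inner continuous_on_id linear_continuous_on) simp
  moreover have "sphere (0::real^'n) 1 \<noteq> {}"
    using norm_axis_1[of undefined] by (metis empty_iff mem_sphere_0)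
  ultimately obtain u where u: "u \<in> sphere 0 1" "\<forall>w\<in>sphere 0 1. q u \<le> q w"
    using continuous_attains_inf[OF compact_sphere] by blast
  then have upos: "q u > 0" using pd by (metis mem_sphere_0 norm_zero q_def zero_neq_one)
  have "q u * (v \<bullet> v) \<le> v \<bullet> (M *v v)" for v
  proof (cases "v = 0")
    case False
    then have "q u \<le> q ((1 / norm v) *\<^sub>R v)" using u(2) by simp
    also have "\<dots> = (v \<bullet> (M *v v)) / (norm v)^2"
      by (simp add: q_def matrix_vector_mult_scaleR power2_eq_square)
    finally show ?thesis
      using False by (simp add: field_simps power2_norm_eq_inner)
  qed simp
  then have "min (q u) 1 * (v \<bullet> v) \<le> v \<bullet> (M *v v)" for v
    by (meson min.cobounded1 mult_right_mono inner_ge_zero order_trans)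
  with upos show thesis by (intro that[of "min (q u) 1"]) auto
qed

lemma inner_axis_matrix_vector_axis: "axis p 1 \<bullet> ((M::real^'n^'n) *v axis q 1) = M$p$q"
proof -
  have "M *v axis q 1 = (\<chi> p. M$p$q)"
    by (simp add: vec_eq_iff matrix_vector_mult_def axis_def if_distrib if_distribR cong: if_cong)
  then show ?thesis by (simp add: inner_axis')
qed

lemma psd_diag_nonneg:
  "\<forall>v. 0 \<le> v \<bullet> ((M::real^'n^'n) *v v) \<Longrightarrow> 0 \<le> M$i$i"
  by (metis inner_axis_matrix_vector_axis)

lemma sym_quadratic_add:
  assumes "transpose (M::real^'n^'n) = M"
  shows "(x + y) \<bullet> (M *v (x + y)) = x \<bullet> (M *v x) + 2 * (x \<bullet> (M *v y)) + y \<bullet> (M *v y)"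
  using inner_sym_matrix_vector[OF assms, of y x]
  by (simp add: matrix_vector_right_distrib inner_add_left inner_add_right)

lemma psd_component_sq_le:
  assumes sym: "transpose (M::real^'n^'n) = M" and psd: "\<forall>v. 0 \<le> v \<bullet> (M *v v)"
    and pos: "0 < M$i$i"
  shows "((M *v v)$i)^2 / M$i$i \<le> v \<bullet> (M *v v)"
proof -
  define t where "t = (M *v v)$i / M$i$i"
  have "0 \<le> (v + (-t) *\<^sub>R axis i 1) \<bullet> (M *v (v + (-t) *\<^sub>R axis i 1))" using psd by blast
  also have "\<dots> = v \<bullet> (M *v v) - 2 * t * (M *v v)$i + t * t * M$i$i"
    using sym_quadratic_add[OF sym, of v "(-t) *\<^sub>R axis i 1"] inner_axis_matrix_vector_axis[of i M i]
      inner_sym_matrix_vector[OF sym, of v "axis i 1"]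
    by (simp add: matrix_vector_mult_scaleR matrix_vector_mult_minus inner_axis inner_axis' inner_commute)
  also have "\<dots> = v \<bullet> (M *v v) - ((M *v v)$i)^2 / M$i$i"
    using pos by (simp add: t_def field_simps power2_eq_square)
  finally show ?thesis by simp
qed

lemma psd_zero_diag_imp_zero:
  assumes sym: "transpose (M::real^'n^'n) = M" and psd: "\<forall>v. 0 \<le> v \<bullet> (M *v v)"
    and zero: "M$j$j = 0"
  shows "M$i$j = 0"
proof -
  define m where "m = M$i$i"
  define x where "x = M$i$j"
  define t where "t = x / (m + 1)"
  have m: "0 \<le> m" using psd_diag_nonneg[OF psd] by (simp add: m_def)
  have "M$j$i = x" using sym by (metis transpose_def vec_lambda_beta x_def)
  then have "0 \<le> (axis j 1 + (-t) *\<^sub>R axis i 1) \<bullet> (M *v (axis j 1 + (-t) *\<^sub>R axis i 1))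
      \<longleftrightarrow> 0 \<le> - 2 * t * x + t * t * m"
    using sym_quadratic_add[OF sym, of "axis j 1" "(-t) *\<^sub>R axis i 1"]
    by (simp add: matrix_vector_mult_scaleR matrix_vector_mult_minus inner_axis_matrix_vector_axis
        zero m_def mult.assoc)
  then have "0 \<le> - 2 * t * x + t * t * m" using psd by blast
  moreover have "(- 2 * t * x + t * t * m) * (m + 1)^2 = - (x^2 * (m + 2))"
  proof -
    have "x = t * (m + 1)" using m by (simp add: t_def)
    then show ?thesis by (simp add: power2_eq_square algebra_simps)
  qed
  ultimately have "0 \<le> - (x^2 * (m + 2))"
    by (metis zero_le_power2 mult_nonneg_nonneg)
  with m have "x = 0" by (smt (verit) mult_pos_pos zero_less_power2)
  then show ?thesis by (simp add: x_def)
qed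

lemma psd_schur_complement:
  fixes M :: "real^'n^'n"
  assumes sym: "transpose M = M" and psd: "\<forall>v. 0 \<le> v \<bullet> (M *v v)" and pos: "0 < M$i$i"
  defines "M' \<equiv> M - (1 / M$i$i) *\<^sub>R outer (column i M) (column i M)"
  shows "transpose M' = M'" and "\<forall>v. 0 \<le> v \<bullet> (M' *v v)"
    and "M'$j$j \<le> M$j$j" and "M'$i$i = 0"
proof -
  show "transpose M' = M'"
    by (simp add: M'_def transpose_diff transpose_scalar transpose_outer sym)
  have "M$a$b = M$b$a" for a b using sym by (metis transpose_def vec_lambda_beta)
  then have "column i M \<bullet> v = (M *v v)$i" for v
    by (simp add: column_def inner_vec_def matrix_vector_mult_def mult_ac)
  then have "v \<bullet> (M' *v v) = v \<bullet> (M *v v) - ((M *v v)$i)^2 / M$i$i" for v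
    by (simp add: M'_def matrix_vector_mult_diff_rdistrib matrix_scaleR_vector outer_mult_vec
        inner_diff_right power2_eq_square inner_commute)
  then show "\<forall>v. 0 \<le> v \<bullet> (M' *v v)"
    using psd_component_sq_le[OF sym psd pos] by simp
  show "M'$j$j \<le> M$j$j" "M'$i$i = 0"
    using pos by (simp_all add: M'_def outer_def column_def)
qed

lemma psd_factor_zero_columns:
  fixes M :: "real^'n^'n"
  assumes "transpose M = M" "\<forall>v. 0 \<le> v \<bullet> (M *v v)"
  shows "\<exists>C::real^'n^'n. M = C ** transpose C \<and> (\<forall>j. M$j$j = 0 \<longrightarrow> column j C = 0)"
  using assms
proof (induction "card {i. M$i$i \<noteq> 0}" arbitrary: M rule: less_induct)
  case less
  note sym = less.prems(1) and psd = less.prems(2)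
  show ?case
  proof (cases "\<forall>i. M$i$i = 0")
    case True
    then have "M = 0" using psd_zero_diag_imp_zero[OF sym psd] by (simp add: vec_eq_iff)
    then show ?thesis by (intro exI[of _ 0]) (simp add: column_def vec_eq_iff)
  next
    case False
    then obtain i where "M$i$i \<noteq> 0" by blast
    with psd_diag_nonneg[OF psd] have pos: "0 < M$i$i" by (simp add: order_less_le)
    define c where "c = column i M"
    define M' where "M' = M - (1 / M$i$i) *\<^sub>R outer c c"
    note schur = psd_schur_complement[OF sym psd pos, folded c_def, folded M'_def]
    have diag': "M'$j$j = 0" if "j = i \<or> M$j$j = 0" for j
      using that schur(3)[of j] schur(4) psd_diag_nonneg[OF schur(2), of j] by auto
    have "card {j. M'$j$j \<noteq> 0} \<le> card ({j. M$j$j \<noteq> 0} - {i})"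
      using diag' by (intro card_mono) auto
    also have "\<dots> < card {j. M$j$j \<noteq> 0}"
      using pos by (intro card_Diff1_less) auto
    finally have "card {j. M'$j$j \<noteq> 0} < card {j. M$j$j \<noteq> 0}" .
    from less.hyps[OF this schur(1,2)] obtain C' where
      C': "M' = C' ** transpose C'" "\<forall>j. M'$j$j = 0 \<longrightarrow> column j C' = 0" by blast
    define d where "d = (1 / sqrt (M$i$i)) *\<^sub>R c"
    define C where "C = C' + outer d (axis i 1)"
    have "C' *v axis i 1 = 0" using C'(2) diag' by (simp add: matrix_vector_mult_basis)
    then have "C ** transpose C = M' + outer d d"
      by (simp add: C_def C'(1) transpose_add transpose_outer matrix_add_ldistrib
          matrix_add_rdistrib matrix_vector_mult_add_rdistrib matrix_mult_outer outer_mult_matrix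
          outer_mult_outer outer_mult_vec)
    also have "outer d d = (1 / M$i$i) *\<^sub>R outer c c"
      using pos by (simp add: d_def outer_def vec_eq_iff)
    finally have "M = C ** transpose C" by (simp add: M'_def)
    moreover have "column j C = 0" if "M$j$j = 0" for j
    proof -
      have "column j C = column j C' + (axis i 1 $ j) *\<^sub>R d"
        by (simp add: C_def column_def outer_def vec_eq_iff)
      moreover have "j \<noteq> i" using that pos by auto
      ultimately show ?thesis using that diag' C'(2) by (simp add: axis_def)
    qed
    ultimately show ?thesis by blast
  qed
qed

lemma pos_def_factor:
  fixes A :: "real^'n^'n"
  assumes sym: "transpose A = A" and pd: "\<forall>v. v \<noteq> 0 \<longrightarrow> v \<bullet> (A *v v) > 0"
  obtains C :: "real^'n^'n" where "A = C ** transpose C" and "invertible C"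
proof -
  have "\<forall>v. 0 \<le> v \<bullet> (A *v v)" using pd by (metis order.refl less_imp_le inner_zero_left)
  from psd_factor_zero_columns[OF sym this] obtain C :: "real^'n^'n" where C: "A = C ** transpose C" by blast
  have "v \<bullet> (A *v v) = (transpose C *v v) \<bullet> (transpose C *v v)" for v
    by (simp add: C inner_matrix_vector_transpose flip: matrix_vector_mul_assoc)
  then have "transpose C *v v = 0 \<Longrightarrow> v = 0" for v using pd by fastforce
  then have "invertible (transpose C)"
    by (simp add: invertible_left_inverse matrix_left_invertible_ker)
  then have "invertible C" using transpose_invertible by fastforce
  show thesis by (rule that[OF C \<open>invertible C\<close>])
qed

section \<open>BFGS for the identity Hessian\<close>

definition proj_perp :: "real^'n \<Rightarrow> real^'n^'n" where
  "proj_perp s = mat 1 - (1 / (s \<bullet> s)) *\<^sub>R outer s s"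

text \<open>The unit-step BFGS update for the quadratic with identity Hessian, where y = s
  and hence V = proj_perp s.\<close>
definition bfgs_id_update :: "real^'n^'n \<Rightarrow> real^'n \<Rightarrow> real^'n^'n" where
  "bfgs_id_update T s = proj_perp s ** T ** proj_perp s + (1 / (s \<bullet> s)) *\<^sub>R outer s s"

lemma proj_perp_mult_vec: "proj_perp s *v v = v - ((s \<bullet> v) / (s \<bullet> s)) *\<^sub>R s"
  by (simp add: proj_perp_def matrix_vector_mult_diff_rdistrib matrix_scaleR_vector outer_mult_vec)

lemma transpose_proj_perp: "transpose (proj_perp s) = proj_perp s"
  by (simp add: proj_perp_def transpose_diff transpose_scalar transpose_outer)

lemma proj_perp_idem: "s \<noteq> 0 \<Longrightarrow> proj_perp s ** proj_perp s = proj_perp s"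
  by (simp add: proj_perp_def matrix_diff_ldistrib matrix_diff_rdistrib matrix_mult_scaleR_left
      matrix_mult_scaleR_right outer_mult_outer algebra_simps)

lemma inner_self_proj_perp:
  "s \<noteq> 0 \<Longrightarrow> v \<bullet> v = (proj_perp s *v v) \<bullet> (proj_perp s *v v) + (s \<bullet> v)^2 / (s \<bullet> s)"
  by (simp add: proj_perp_mult_vec inner_diff_left inner_diff_right power2_eq_square inner_commute
      field_simps)

lemma transpose_bfgs_id_update:
  "transpose T = T \<Longrightarrow> transpose (bfgs_id_update T s) = bfgs_id_update T s"
  by (simp add: bfgs_id_update_def transpose_add transpose_scalar transpose_outer matrix_transpose_mul
      transpose_proj_perp matrix_mul_assoc)

lemma inner_bfgs_id_update:
  "v \<bullet> (bfgs_id_update T s *v v)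
     = (proj_perp s *v v) \<bullet> (T *v (proj_perp s *v v)) + (s \<bullet> v)^2 / (s \<bullet> s)"
proof -
  have "bfgs_id_update T s *v v
      = proj_perp s *v (T *v (proj_perp s *v v)) + ((s \<bullet> v) / (s \<bullet> s)) *\<^sub>R s"
    by (simp add: bfgs_id_update_def matrix_vector_mult_add_rdistrib matrix_scaleR_vector
        outer_mult_vec matrix_vector_mul_assoc matrix_mul_assoc)
  then show ?thesis
    by (simp add: inner_add_right inner_matrix_vector_transpose[of v "proj_perp s"]
        transpose_proj_perp power2_eq_square inner_commute)
qed

lemma bfgs_id_update_lower_bound:
  assumes "s \<noteq> 0" "\<mu> \<le> 1" "\<forall>v. \<mu> * (v \<bullet> v) \<le> v \<bullet> (T *v v)"
  shows "\<mu> * (v \<bullet> v) \<le> v \<bullet> (bfgs_id_update T s *v v)"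
proof -
  have "\<mu> * ((proj_perp s *v v) \<bullet> (proj_perp s *v v))
      \<le> (proj_perp s *v v) \<bullet> (T *v (proj_perp s *v v))"
    using assms(3) by blast
  moreover have "\<mu> * ((s \<bullet> v)^2 / (s \<bullet> s)) \<le> (s \<bullet> v)^2 / (s \<bullet> s)"
    using mult_right_mono[OF assms(2), of "(s \<bullet> v)^2 / (s \<bullet> s)"] by simp
  ultimately show ?thesis
    using inner_self_proj_perp[OF assms(1), of v] inner_bfgs_id_update[of v T s]
    by (simp add: distrib_left)
qed

lemma bfgs_id_update_minus_id:
  assumes "s \<noteq> 0"
  shows "bfgs_id_update T s - mat 1 = proj_perp s ** (T - mat 1) ** proj_perp s"
proof -
  have "proj_perp s ** (T - mat 1) ** proj_perp s = proj_perp s ** T ** proj_perp s - proj_perp s"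
    by (simp add: matrix_diff_ldistrib matrix_diff_rdistrib proj_perp_idem[OF assms])
  then show ?thesis by (simp add: bfgs_id_update_def proj_perp_def algebra_simps)
qed

lemma trace_square_proj_perp_conj_le:
  assumes E: "transpose E = E" and s: "s \<noteq> 0"
  shows "trace ((proj_perp s ** E ** proj_perp s) ** (proj_perp s ** E ** proj_perp s))
           \<le> trace (E ** E) - ((E *v s) \<bullet> (E *v s)) / (s \<bullet> s)"
proof -
  define P where "P = proj_perp s"
  define a where "a = 1 / (s \<bullet> s)"
  define w where "w = E *v s"
  have PP: "P ** P = P" using proj_perp_idem[OF s] by (simp add: P_def)
  have "(P ** E ** P) ** (P ** E ** P) = P ** ((E ** (P ** P)) ** (E ** P))"
    by (simp add: matrix_mul_assoc)
  then have "trace ((P ** E ** P) ** (P ** E ** P)) = trace (P ** ((E ** P) ** (E ** P)))"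
    by (simp add: PP)
  also have "\<dots> = trace (((E ** P) ** (E ** P)) ** P)" by (rule trace_mul_sym)
  also have "\<dots> = trace ((E ** P) ** (E ** P))"
    by (simp add: PP flip: matrix_mul_assoc)
  finally have tr_EP: "trace ((P ** E ** P) ** (P ** E ** P)) = trace ((E ** P) ** (E ** P))" .
  have EP: "E ** P = E - a *\<^sub>R outer w s"
    by (simp add: P_def proj_perp_def a_def w_def matrix_diff_ldistrib matrix_mult_scaleR_right
        matrix_mult_outer)
  have "(E ** P) ** (E ** P) = E ** E - a *\<^sub>R (E ** outer w s) - a *\<^sub>R (outer w s ** E)
          + (a * a) *\<^sub>R (outer w s ** outer w s)"
    by (simp add: EP matrix_diff_ldistrib matrix_diff_rdistrib matrix_mult_scaleR_right
        matrix_mult_scaleR_left algebra_simps)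
  moreover have "trace (E ** outer w s) = w \<bullet> w"
    using inner_matrix_vector_transpose[of s E w]
    by (simp add: matrix_mult_outer trace_outer E w_def inner_commute)
  moreover have "trace (outer w s ** E) = w \<bullet> w"
    by (simp add: outer_mult_matrix trace_outer E w_def)
  moreover have "trace (outer w s ** outer w s) = (s \<bullet> w)^2"
    by (simp add: outer_mult_outer trace_scaleR trace_outer inner_commute power2_eq_square)
  ultimately have "trace ((E ** P) ** (E ** P))
      = trace (E ** E) - 2 * a * (w \<bullet> w) + a * a * (s \<bullet> w)^2"
    by (simp add: trace_add trace_sub trace_scaleR)
  moreover have "a * a * (s \<bullet> w)^2 \<le> a * (w \<bullet> w)"
  proof -
    have "(s \<bullet> w)^2 \<le> (s \<bullet> s) * (w \<bullet> w)"
      using Cauchy_Schwarz_ineq[of s w] by (simp add: power2_eq_square)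
    then have "a * a * (s \<bullet> w)^2 \<le> a * a * ((s \<bullet> s) * (w \<bullet> w))"
      by (intro mult_left_mono) auto
    also have "\<dots> = a * (w \<bullet> w)" using s by (simp add: a_def)
    finally show ?thesis .
  qed
  ultimately show ?thesis using tr_EP by (simp add: P_def a_def w_def)
qed

text \<open>The linesearch-free BFGS method for f z = norm z ^ 2 / 2, whose gradient is the identity.\<close>
definition lf_bfgs_id_step :: "(real^'n) \<times> (real^'n^'n) \<Rightarrow> (real^'n) \<times> (real^'n^'n)" where
  "lf_bfgs_id_step st =
     (let z = fst st; T = snd st; s = - (T *v z)
      in if z = 0 then st
         else ((if norm (z + s) < norm z then z + s else z), bfgs_id_update T s))"

lemma coercive_matrix_vector_nonzero:
  fixes T :: "real^'n^'n"
  assumes "0 < \<mu>" "\<forall>v. \<mu> * (v \<bullet> v) \<le> v \<bullet> (T *v v)" "z \<noteq> 0"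
  shows "T *v z \<noteq> 0"
proof
  assume "T *v z = 0"
  then have "\<mu> * (z \<bullet> z) \<le> 0" using assms(2) by (metis inner_zero_right)
  with assms(1,3) show False by (smt (verit) inner_gt_zero_iff mult_pos_pos)
qed

lemma lf_bfgs_id_step_invariant:
  fixes z :: "real^'n" and T :: "real^'n^'n"
  assumes sym: "transpose T = T" and \<mu>: "0 < \<mu>" "\<mu> \<le> 1"
    and lower: "\<forall>v. \<mu> * (v \<bullet> v) \<le> v \<bullet> (T *v v)"
  defines "T' \<equiv> snd (lf_bfgs_id_step (z, T))"
  shows "transpose T' = T' \<and> (\<forall>v. \<mu> * (v \<bullet> v) \<le> v \<bullet> (T' *v v))"
proof (cases "z = 0")
  case False
  then have "- (T *v z) \<noteq> 0" using coercive_matrix_vector_nonzero[OF \<mu>(1) lower] by simp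
  with False show ?thesis
    using transpose_bfgs_id_update[OF sym] bfgs_id_update_lower_bound[OF _ \<mu>(2) lower]
    by (simp add: T'_def lf_bfgs_id_step_def Let_def)
qed (use sym lower in \<open>simp add: T'_def lf_bfgs_id_step_def\<close>)

lemma summable_of_decreasing_potential:
  fixes d F :: "nat \<Rightarrow> real"
  assumes "\<And>k. 0 \<le> d k" "\<And>k. 0 \<le> F k" "\<And>k. F (Suc k) \<le> F k - d k"
  shows "summable d"
proof (rule summableI_nonneg_bounded[where x = "F 0"])
  show "sum d {..<n} \<le> F 0" for n
  proof -
    have "sum d {..<n} \<le> F 0 - F n"
    proof (induction n)
      case (Suc n)
      then show ?case using assms(3)[of n] by simp
    qed simp
    with assms(2)[of n] show ?thesis by linarith
  qed
qed (use assms(1) in auto)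

text \<open>The potential is the squared Frobenius norm of T - I.\<close>
lemma bfgs_id_relative_error_summable:
  fixes T :: "nat \<Rightarrow> real^'n^'n" and s :: "nat \<Rightarrow> real^'n"
  assumes sym: "\<And>k. transpose (T k) = T k" and s: "\<And>k. s k \<noteq> 0"
    and upd: "\<And>k. T (Suc k) = bfgs_id_update (T k) (s k)"
  shows "summable (\<lambda>k. (norm ((T k - mat 1) *v s k) / norm (s k))^2)"
proof (rule summable_of_decreasing_potential)
  define E where "E k = T k - mat 1" for k
  have E_sym: "transpose (E k) = E k" for k by (simp add: E_def transpose_diff sym)
  show "0 \<le> trace (E k ** E k)" for k using trace_sym_square_nonneg[OF E_sym] .
  show "trace (E (Suc k) ** E (Suc k))
      \<le> trace (E k ** E k) - (norm ((T k - mat 1) *v s k) / norm (s k))^2" for k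
    using trace_square_proj_perp_conj_le[OF E_sym s, of k] bfgs_id_update_minus_id[OF s, of "T k"]
    by (simp add: E_def upd power_divide power2_norm_eq_inner)
qed simp

lemma unit_step_contraction:
  fixes T :: "real^'n^'n" and z s :: "real^'n"
  assumes \<mu>: "0 < \<mu>" and lower: "\<forall>v. \<mu> * (v \<bullet> v) \<le> v \<bullet> (T *v v)"
    and s: "s = - (T *v z)" and small: "norm ((T - mat 1) *v s) \<le> \<mu> / 4 * norm s"
  shows "norm (z + s) \<le> norm z / 3"
proof -
  define r where "r = z + s"
  have "T *v r = T *v s - s"
    unfolding r_def s matrix_vector_right_distrib matrix_vector_mult_minus by simp
  also have "\<dots> = (T - mat 1) *v s" by (simp add: matrix_vector_mult_diff_rdistrib)
  finally have "T *v r = (T - mat 1) *v s" .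
  then have "\<mu> * (norm r)^2 \<le> r \<bullet> ((T - mat 1) *v s)"
    using lower by (metis power2_norm_eq_inner)
  also have "\<dots> \<le> norm r * (\<mu> / 4 * norm s)"
    using norm_cauchy_schwarz small by (meson mult_left_mono norm_ge_zero order_trans)
  finally have "\<mu> * (norm r)^2 \<le> norm r * (\<mu> / 4 * norm s)" .
  then have "norm r \<le> norm s / 4"
    using \<mu> by (cases "norm r = 0") (auto simp: power2_eq_square field_simps)
  moreover have "norm s \<le> norm r + norm z"
    using norm_triangle_ineq4[of r z] by (simp add: r_def)
  ultimately show ?thesis by (simp add: r_def)
qed

lemma lf_bfgs_id_iterates_invariant:
  fixes T0 :: "real^'n^'n" and z0 :: "real^'n"
  assumes sym: "transpose T0 = T0" and \<mu>: "0 < \<mu>" "\<mu> \<le> 1"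
    and lower: "\<forall>v. \<mu> * (v \<bullet> v) \<le> v \<bullet> (T0 *v v)"
  defines "T k \<equiv> snd ((lf_bfgs_id_step ^^ k) (z0, T0))"
  shows "transpose (T k) = T k \<and> (\<forall>v. \<mu> * (v \<bullet> v) \<le> v \<bullet> (T k *v v))"
proof (induction k)
  case (Suc k)
  have "T (Suc k) = snd (lf_bfgs_id_step (fst ((lf_bfgs_id_step ^^ k) (z0, T0)), T k))"
    by (simp add: T_def)
  then show ?case using lf_bfgs_id_step_invariant[OF _ \<mu>] Suc by (simp only:) blast
qed (simp add: T_def sym lower)

lemma lf_bfgs_id_stays_at_zero:
  assumes "fst ((lf_bfgs_id_step ^^ k) st) = 0" and "k \<le> j"
  shows "fst ((lf_bfgs_id_step ^^ j) st) = 0"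
  using assms(2,1) by (induction j rule: dec_induct) (simp_all add: lf_bfgs_id_step_def)

lemma lf_bfgs_id_tendsto_zero:
  fixes T0 :: "real^'n^'n"
  assumes sym: "transpose T0 = T0" and pd: "\<forall>v. v \<noteq> 0 \<longrightarrow> v \<bullet> (T0 *v v) > 0"
  shows "(\<lambda>k. fst ((lf_bfgs_id_step ^^ k) (z0, T0))) \<longlonglongrightarrow> 0"
proof -
  obtain \<mu> where \<mu>: "0 < \<mu>" "\<mu> \<le> 1" and lower0: "\<forall>v. \<mu> * (v \<bullet> v) \<le> v \<bullet> (T0 *v v)"
    using pos_def_lower_bound[OF pd] by blast
  define z where "z k = fst ((lf_bfgs_id_step ^^ k) (z0, T0))" for k
  define T where "T k = snd ((lf_bfgs_id_step ^^ k) (z0, T0))" for k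
  define s where "s k = - (T k *v z k)" for k
  have inv: "transpose (T k) = T k \<and> (\<forall>v. \<mu> * (v \<bullet> v) \<le> v \<bullet> (T k *v v))" for k
    unfolding T_def by (rule lf_bfgs_id_iterates_invariant[OF sym \<mu> lower0])
  show ?thesis
  proof (cases "\<exists>k. z k = 0")
    case True
    then obtain k where "z k = 0" by blast
    then have "z j = 0" if "k \<le> j" for j
      using lf_bfgs_id_stays_at_zero that unfolding z_def by blast
    then have "\<forall>\<^sub>F j in sequentially. z j = 0" by (rule eventually_sequentiallyI)
    then show ?thesis by (simp add: z_def[symmetric] tendsto_eventually)
  next
    case False
    then have s_nz: "s k \<noteq> 0" for k
      using coercive_matrix_vector_nonzero[OF \<mu>(1)] inv by (simp add: s_def) blast
    have step: "(z (Suc k), T (Suc k)) = lf_bfgs_id_step (z k, T k)" for k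
      by (simp add: z_def T_def)
    have T_upd: "T (Suc k) = bfgs_id_update (T k) (s k)"
      and z_upd: "z (Suc k) = (if norm (z k + s k) < norm (z k) then z k + s k else z k)" for k
      using step[of k] False by (simp_all add: lf_bfgs_id_step_def s_def Let_def)
    have "summable (\<lambda>k. (norm ((T k - mat 1) *v s k) / norm (s k))^2)"
      by (rule bfgs_id_relative_error_summable) (use inv s_nz T_upd in auto)
    then have "(\<lambda>k. norm ((T k - mat 1) *v s k) / norm (s k)) \<longlonglongrightarrow> 0"
      using summable_LIMSEQ_zero by fastforce
    then have "\<forall>\<^sub>F k in sequentially. norm ((T k - mat 1) *v s k) / norm (s k) < \<mu> / 4"
      by (rule order_tendstoD(2)) (use \<mu>(1) in simp)
    then obtain K where small: "norm ((T k - mat 1) *v s k) \<le> \<mu> / 4 * norm (s k)"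
      if "K \<le> k" for k
      unfolding eventually_sequentially using s_nz by (meson divide_less_eq less_imp_le zero_less_norm_iff)
    have contraction: "norm (z (Suc k)) \<le> 1/3 * norm (z k)" if "K \<le> k" for k
    proof -
      have "norm (z k + s k) \<le> norm (z k) / 3"
        using unit_step_contraction[OF \<mu>(1) _ s_def small[OF that]] inv by blast
      moreover have "norm (z k) > 0" using False by simp
      ultimately have "norm (z k + s k) < norm (z k)" by linarith
      then have "z (Suc k) = z k + s k" using z_upd[of k] by simp
      with \<open>norm (z k + s k) \<le> norm (z k) / 3\<close> show ?thesis by simp
    qed
    have "summable z" by (rule summable_ratio_test[of "1/3" K z]) (use contraction in auto)
    then show ?thesis unfolding z_def[symmetric] by (rule summable_LIMSEQ_zero)
  qed
qed

section \<open>Change of coordinates\<close>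

text \<open>If A = C C^T, the substitution z = C^T (x - xstar), T = C^T H C turns the quadratic
  into norm z ^ 2 / 2 plus a constant.\<close>
definition std_coords ::
  "real^'n^'n \<Rightarrow> real^'n \<Rightarrow> (real^'n) \<times> (real^'n^'n) \<Rightarrow> (real^'n) \<times> (real^'n^'n)" where
  "std_coords C xstar st = (transpose C *v (fst st - xstar), transpose C ** snd st ** C)"

lemma bfgs_update_std_coords:
  fixes C H :: "real^'n^'n" and x xstar :: "real^'n"
  assumes grad: "\<forall>x. grad x = C *v (transpose C *v (x - xstar))"
  defines "T \<equiv> transpose C ** H ** C" and "z \<equiv> transpose C *v (x - xstar)"
  shows "transpose C ** bfgs_update grad x H ** C = bfgs_id_update T (- (T *v z))"
proof -
  define s where "s = - (H *v grad x)"
  define t where "t = transpose C *v s"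
  define a where "a = 1 / (t \<bullet> t)"
  define V where "V = mat 1 - a *\<^sub>R outer s (C *v t)"
  have t: "t = - (T *v z)"
    by (simp add: t_def s_def T_def z_def grad matrix_vector_mult_minus matrix_vector_mul_assoc
        matrix_mul_assoc)
  have y: "grad (x + s) - grad x = C *v t"
    by (simp add: grad t_def flip: matrix_vector_mult_diff_distrib)
  have sy: "s \<bullet> (C *v t) = t \<bullet> t"
    by (simp add: t_def inner_matrix_vector_transpose)
  have upd: "bfgs_update grad x H = V ** H ** transpose V + a *\<^sub>R outer s s"
    unfolding bfgs_update_def Let_def s_def[symmetric] y sy V_def a_def ..
  have CV: "transpose C ** V = proj_perp t ** transpose C"
    by (simp add: V_def a_def t_def proj_perp_def matrix_diff_ldistrib matrix_diff_rdistrib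
        matrix_mult_scaleR_left matrix_mult_scaleR_right matrix_mult_outer outer_mult_matrix)
  then have VC: "transpose V ** C = C ** proj_perp t"
    by (metis matrix_transpose_mul transpose_proj_perp transpose_transpose)
  have "transpose C ** bfgs_update grad x H ** C
      = (transpose C ** V) ** H ** (transpose V ** C) + a *\<^sub>R outer t t"
    by (simp add: upd matrix_add_ldistrib matrix_add_rdistrib matrix_mult_scaleR_left
        matrix_mult_scaleR_right matrix_mult_outer outer_mult_matrix matrix_mul_assoc t_def)
  also have "\<dots> = bfgs_id_update T (- (T *v z))"
    by (simp add: CV VC t bfgs_id_update_def T_def a_def matrix_mul_assoc)
  finally show ?thesis .
qed

lemma lf_bfgs_step_std_coords:
  fixes C :: "real^'n^'n"
  assumes grad: "\<forall>x. grad x = C *v (transpose C *v (x - xstar))"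
    and f: "\<forall>x. f x = f xstar + (norm (transpose C *v (x - xstar)))^2 / 2"
    and C: "inj ((*v) C)"
  shows "std_coords C xstar (lf_bfgs_step f grad st) = lf_bfgs_id_step (std_coords C xstar st)"
proof -
  obtain x H where st: "st = (x, H)" by fastforce
  define T where "T = transpose C ** H ** C"
  define z where "z = transpose C *v (x - xstar)"
  define s where "s = - (H *v grad x)"
  have grad_x: "grad x = C *v z" by (simp add: grad z_def)
  have "transpose C *v (x + s - xstar) = transpose C *v ((x - xstar) + s)"
    by (rule arg_cong[where f = "(*v) (transpose C)"]) simp
  also have "\<dots> = z + transpose C *v s" by (simp only: matrix_vector_right_distrib z_def)
  also have "transpose C *v s = - (T *v z)"
    by (simp add: s_def T_def grad_x matrix_vector_mult_minus matrix_vector_mul_assoc matrix_mul_assoc)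
  finally have z_step: "transpose C *v (x + s - xstar) = z + - (T *v z)" .
  have std: "std_coords C xstar st = (z, T)" by (simp add: std_coords_def st z_def T_def)
  show ?thesis
  proof (cases "z = 0")
    case True
    then have "lf_bfgs_step f grad st = st" by (simp add: grad_x st lf_bfgs_step_def)
    with True show ?thesis by (simp add: std lf_bfgs_id_step_def)
  next
    case False
    then have "grad x \<noteq> 0" using injD[OF C, of z 0] by (auto simp: grad_x)
    then have "lf_bfgs_step f grad st = (if f (x + s) < f x then x + s else x, bfgs_update grad x H)"
      by (simp add: st lf_bfgs_step_def Let_def s_def)
    moreover have "f (x + s) < f x \<longleftrightarrow> (norm (z + - (T *v z)))^2 < (norm z)^2"
      using f[rule_format, of "x + s"] f[rule_format, of x] by (simp add: z_step z_def)
    then have "f (x + s) < f x \<longleftrightarrow> norm (z + - (T *v z)) < norm z"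
      by (auto intro: power_strict_mono power2_less_imp_less)
    moreover have "transpose C *v (x - xstar) = z" by (simp add: z_def)
    ultimately show ?thesis
      using False bfgs_update_std_coords[OF grad, where H = H and x = x, folded T_def z_def]
      unfolding std by (simp add: std_coords_def lf_bfgs_id_step_def Let_def z_step)
  qed
qed

lemma lf_bfgs_std_coords:
  fixes C :: "real^'n^'n"
  assumes "\<forall>x. grad x = C *v (transpose C *v (x - xstar))"
    and "\<forall>x. f x = f xstar + (norm (transpose C *v (x - xstar)))^2 / 2"
    and "inj ((*v) C)"
  shows "std_coords C xstar (lf_bfgs f grad x0 H0 k)
    = (lf_bfgs_id_step ^^ k) (std_coords C xstar (x0, H0))"
  by (induction k) (simp_all add: lf_bfgs_step_std_coords[OF assms])

lemma lf_bfgs_tendsto_of_std_form: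
  fixes C H0 :: "real^'n^'n"
  assumes grad: "\<forall>x. grad x = C *v (transpose C *v (x - xstar))"
    and f: "\<forall>x. f x = f xstar + (norm (transpose C *v (x - xstar)))^2 / 2"
    and C: "invertible C"
    and H0_sym: "transpose H0 = H0" and H0_pd: "\<forall>v. v \<noteq> 0 \<longrightarrow> v \<bullet> (H0 *v v) > 0"
  shows "(\<lambda>k. fst (lf_bfgs f grad x0 H0 k)) \<longlonglongrightarrow> xstar"
proof -
  have C_inj: "inj ((*v) C)"
    using C by (simp add: invertible_left_inverse matrix_left_invertible_injective)
  obtain B where B: "B ** transpose C = mat 1"
    using transpose_invertible[OF C] invertible_left_inverse by blast
  define T0 where "T0 = transpose C ** H0 ** C"
  have "transpose T0 = T0"
    by (simp add: T0_def H0_sym matrix_transpose_mul matrix_mul_assoc)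
  moreover have "v \<bullet> (T0 *v v) > 0" if "v \<noteq> 0" for v
  proof -
    have "C *v v \<noteq> 0" using that injD[OF C_inj, of v 0] by auto
    moreover have "v \<bullet> (T0 *v v) = (C *v v) \<bullet> (H0 *v (C *v v))"
      using inner_matrix_vector_transpose[of v "transpose C" "H0 *v (C *v v)"]
      by (simp add: T0_def flip: matrix_vector_mul_assoc)
    ultimately show ?thesis using H0_pd by simp
  qed
  ultimately have "(\<lambda>k. fst ((lf_bfgs_id_step ^^ k) (transpose C *v (x0 - xstar), T0))) \<longlonglongrightarrow> 0"
    by (intro lf_bfgs_id_tendsto_zero) auto
  moreover have "fst ((lf_bfgs_id_step ^^ k) (transpose C *v (x0 - xstar), T0))
      = transpose C *v (fst (lf_bfgs f grad x0 H0 k) - xstar)" for k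
    using arg_cong[OF lf_bfgs_std_coords[OF grad f C_inj, of x0 H0 k], of fst]
    by (simp add: std_coords_def T0_def)
  ultimately have "(\<lambda>k. transpose C *v (fst (lf_bfgs f grad x0 H0 k) - xstar)) \<longlonglongrightarrow> 0"
    by simp
  then have "(\<lambda>k. xstar + B *v (transpose C *v (fst (lf_bfgs f grad x0 H0 k) - xstar)))
      \<longlonglongrightarrow> xstar + B *v 0"
    by (intro tendsto_intros bounded_linear.tendsto[OF matrix_vector_mul_bounded_linear])
  then show ?thesis by (simp add: matrix_vector_mul_assoc B)
qed

section \<open>Quadratic objectives\<close>

lemma gderiv_eq_zero_at_min:
  assumes "GDERIV f x :> g" and "\<forall>y. f x \<le> f y"
  shows "g = 0"
proof -
  have "(f has_derivative (\<lambda>h. h \<bullet> g)) (at x)" using assms(1) by (simp add: gderiv_def)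
  from has_derivative_local_min[OF this] have "(\<lambda>h. h \<bullet> g) = (\<lambda>h. 0)"
    using assms(2) by simp
  then show ?thesis by (metis inner_eq_zero_iff)
qed

lemma quadratic_gradient:
  fixes A :: "real^'n^'n"
  assumes sym: "transpose A = A"
    and f: "\<forall>x. f x = (1/2) * (x \<bullet> (A *v x)) + b \<bullet> x + c"
    and grad: "GDERIV f x :> g"
  shows "g = A *v x + b"
proof -
  have "f = (\<lambda>x. (1/2) * (x \<bullet> (A *v x)) + b \<bullet> x + c)" using f by auto
  then have "(f has_derivative (\<lambda>h. (1/2) * (x \<bullet> (A *v h) + h \<bullet> (A *v x)) + b \<bullet> h)) (at x)"
    by (auto intro!: derivative_eq_intros bounded_linear_imp_has_derivative)
  moreover have "(1/2) * (x \<bullet> (A *v h) + h \<bullet> (A *v x)) + b \<bullet> h = h \<bullet> (A *v x + b)" for h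
    using inner_sym_matrix_vector[OF sym, of x h] by (simp add: inner_add_right inner_commute)
  ultimately have "(f has_derivative (\<lambda>h. h \<bullet> (A *v x + b))) (at x)" by simp
  moreover have "(f has_derivative (\<lambda>h. h \<bullet> g)) (at x)" using grad by (simp add: gderiv_def)
  ultimately have "h \<bullet> g = h \<bullet> (A *v x + b)" for h
    by (metis has_derivative_unique)
  then show ?thesis using vector_eq_ldot by blast
qed

lemma quadratic_eq_at_critical_point:
  fixes A :: "real^'n^'n"
  assumes sym: "transpose A = A"
    and f: "\<forall>x. f x = (1/2) * (x \<bullet> (A *v x)) + b \<bullet> x + c"
    and crit: "A *v xstar + b = 0"
  shows "f x = f xstar + (1/2) * ((x - xstar) \<bullet> (A *v (x - xstar)))"
proof -
  have "b = - (A *v xstar)" using crit by (simp add: eq_neg_iff_add_eq_0 add.commute)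
  then show ?thesis
    using f[rule_format, of x] f[rule_format, of xstar] inner_sym_matrix_vector[OF sym, of xstar x]
    by (simp add: matrix_vector_mult_diff_distrib inner_diff_left inner_diff_right inner_commute
        algebra_simps)
qed

lemma quadratic_std_form:
  fixes A C :: "real^'n^'n"
  assumes sym: "transpose A = A"
    and f: "\<forall>x. f x = (1/2) * (x \<bullet> (A *v x)) + b \<bullet> x + c"
    and grad: "\<forall>x. GDERIV f x :> grad x"
    and min: "\<forall>x. f xstar \<le> f x"
    and A_C: "A = C ** transpose C"
  shows "\<forall>x. grad x = C *v (transpose C *v (x - xstar))"
    and "\<forall>x. f x = f xstar + (norm (transpose C *v (x - xstar)))^2 / 2"
proof -
  have grad_eq: "grad x = A *v x + b" for x
    using quadratic_gradient[OF sym f grad[rule_format]] .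
  have crit: "A *v xstar + b = 0"
    using gderiv_eq_zero_at_min[OF grad[rule_format] min] grad_eq by simp
  show "\<forall>x. grad x = C *v (transpose C *v (x - xstar))"
  proof
    fix x
    have "grad x = A *v x - (A *v xstar + b) + b" by (simp add: grad_eq crit)
    then show "grad x = C *v (transpose C *v (x - xstar))"
      by (simp add: A_C matrix_vector_mul_assoc matrix_vector_mult_diff_distrib)
  qed
  have quad: "v \<bullet> (A *v v) = (norm (transpose C *v v))^2" for v
    by (simp add: A_C power2_norm_eq_inner inner_matrix_vector_transpose
        flip: matrix_vector_mul_assoc)
  show "\<forall>x. f x = f xstar + (norm (transpose C *v (x - xstar)))^2 / 2"
  proof
    fix x
    show "f x = f xstar + (norm (transpose C *v (x - xstar)))^2 / 2"
      using quadratic_eq_at_critical_point[OF sym f crit, of x] quad[of "x - xstar"] by simp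
  qed
qed

theorem mainTheorem5:
  fixes A :: "real^'n^'n" and b :: "real^'n" and c :: real
    and f :: "real^'n \<Rightarrow> real" and grad :: "real^'n \<Rightarrow> real^'n"
    and xstar x0 :: "real^'n" and H0 :: "real^'n^'n"
  assumes A_sym: "transpose A = A"
    and A_pd: "\<forall>v. v \<noteq> 0 \<longrightarrow> v \<bullet> (A *v v) > 0"
    and f_def: "\<forall>x. f x = (1/2) * (x \<bullet> (A *v x)) + b \<bullet> x + c"
    and grad_f: "\<forall>x. GDERIV f x :> grad x"
    and xstar_min: "\<forall>x. f xstar \<le> f x"
    and H0_sym: "transpose H0 = H0"
    and H0_pd: "\<forall>v. v \<noteq> 0 \<longrightarrow> v \<bullet> (H0 *v v) > 0"
  shows "(\<lambda>k. fst (lf_bfgs f grad x0 H0 k)) \<longlonglongrightarrow> xstar"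
proof -
  obtain C :: "real^'n^'n" where A_C: "A = C ** transpose C" and C: "invertible C"
    using pos_def_factor[OF A_sym A_pd] .
  note std_form = quadratic_std_form[OF A_sym f_def grad_f xstar_min A_C]
  show ?thesis by (rule lf_bfgs_tendsto_of_std_form[OF std_form C H0_sym H0_pd])
qed

end
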